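(* Consider an instance of the min-cost chain-constrained spanning tree problem (defined in the context) for which the LP $(P_1)$ is feasible, and let $\lambda>1$. The following algorithm returns a spanning tree $T$ of $G$ with $c(T)\le\frac{\lambda}{\lambda-1}\cdot\mathrm{OPT}$ and $|\delta_T(S)|\le 9\lambda b_S$ for all $S\in\mathcal{S}$: (1) compute an optimal solution $x^*$ to $(P_\lambda)$ and a laminar decomposition $\mathcal{L}$ of $x^*$; (2) compute a fractional spanning tree $x'$ and laminar family $\mathcal{L}'$ such that $(x',\mathcal{L}')$ is a rainbow-free decomposition, $\mathrm{supp}(x')\subseteq\mathrm{supp}(x^* )$, $\mathcal{L}\subseteq\mathcal{L}'$, and $x'(\delta(S))\le x^*(\delta(S))$ for all $S\in\mathcal{S}$; (3) apply the Olver–Zenklusen rounding algorithm to $(x',\mathcal{L}')$, which returns for every $L\in\mathcal{L}'$ a spanning tree $T_L\subseteq\mathrm{supp}(x')$ of $G^{\mathcal{L}'}_L$ such that the concatenation $T$ of the $T_L$ is a spanning tree of $G$ with $|\delta_T(S)|\le 9x'(\delta(S))$ for all $S\in\mathcal{S}$; return $T$.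
   Context: Min-cost chain-constrained spanning tree: given an undirected connected graph $G=(V,E)$, costs $c_e\ge0$, a chain $\mathcal{S}$ of node sets $S_1\subsetneq\dots\subsetneq S_\ell\subsetneq V$ and integers $b_S$ ($S\in\mathcal{S}$), find a min-cost spanning tree $T$ with $|\delta_T(S)|\le b_S$ for all $S\in\mathcal{S}$, where $\delta_T(S)=T\cap\delta(S)$. Notation: $E(S)$ = edges with both ends in $S$, $\delta(S)$ = edges with exactly one end in $S$, $z(F)=\sum_{e\in F}z_e$, $\mathrm{supp}(z)=\{e:z_e>0\}$, $c(T)=\sum_{e\in T}c_e$. For $\lambda\ge1$, $(P_\lambda)$ is the LP: minimize $\sum_e c_ex_e$ subject to $x(E(S))\le|S|-1$ for all $\emptyset\ne S\subsetneq V$, $x(E)=|V|-1$, $x(\delta(S))\le\lambda b_S$ for all $S\in\mathcal{S}$, $x\ge0$. $\mathrm{OPT}(\lambda)$ is its optimal value and $\mathrm{OPT}=\mathrm{OPT}(1)$. Points satisfying the first two constraint families and $x\ge 0$ are fractional spanning trees. A laminar decomposition of a fractional spanning tree $x$ is an inclusion-wise maximal laminar family of nonempty sets $A\subseteq V$ with $x(E(A))=|A|-1$. For a laminar family $\mathcal{L}$ and $L\in\mathcal{L}$, $G^{\mathcal{L}}_L$ is the graph obtained from $(L,E(L))$ by contracting the maximal members of $\mathcal{L}$ strictly contained in $L$. With $\mathcal{S}_e=\{S\in\mathcal{S}:e\in\delta(S)\}$, edges $e,f$ form a rainbow if $\mathcal{S}_e\subseteq\mathcal{S}_f$ or $\mathcal{S}_f\subseteq\mathcal{S}_e$;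 $(x,\mathcal{L})$ is rainbow-free if $\mathcal{L}$ is a laminar decomposition of $x$ and for every $L\in\mathcal{L}$ no two edges of $\mathrm{supp}(x)\cap E(G^{\mathcal{L}}_L)$ form a rainbow. *)

theory Defs
  imports Complex_Main
begin

text \<open>Undirected (multi)graphs: a vertex set V, an edge set E, and an endpoint map
  en assigning to each edge its two-element set of ends.\<close>

definition Ein :: "('e \<Rightarrow> 'a set) \<Rightarrow> 'e set \<Rightarrow> 'a set \<Rightarrow> 'e set" where
  "Ein en E S = {e \<in> E. en e \<subseteq> S}"

definition dlt :: "('e \<Rightarrow> 'a set) \<Rightarrow> 'e set \<Rightarrow> 'a set \<Rightarrow> 'e set" where
  "dlt en E S = {e \<in> E. card (en e \<inter> S) = 1}"

definition adj :: "('e \<Rightarrow> 'a set) \<Rightarrow> 'e set \<Rightarrow> ('a \<times> 'a) set" where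
  "adj en T = {(u, v). \<exists>e \<in> T. en e = {u, v}}"

definition connected_graph :: "'a set \<Rightarrow> ('e \<Rightarrow> 'a set) \<Rightarrow> 'e set \<Rightarrow> bool" where
  "connected_graph W en T \<longleftrightarrow> (\<forall>u \<in> W. \<forall>v \<in> W. (u, v) \<in> (adj en T)\<^sup>*)"

definition is_spanning_tree :: "'a set \<Rightarrow> 'e set \<Rightarrow> ('e \<Rightarrow> 'a set) \<Rightarrow> 'e set \<Rightarrow> bool" where
  "is_spanning_tree W F en T \<longleftrightarrow>
     T \<subseteq> F \<and> (\<forall>e \<in> T. card (en e) = 2 \<and> en e \<subseteq> W) \<and>
     connected_graph W en T \<and>
     (\<forall>e \<in> T. \<forall>u v. en e = {u, v} \<longrightarrow> (u, v) \<notin> (adj en (T - {e}))\<^sup>*)"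

definition frac_st :: "'a set \<Rightarrow> 'e set \<Rightarrow> ('e \<Rightarrow> 'a set) \<Rightarrow> ('e \<Rightarrow> real) \<Rightarrow> bool" where
  "frac_st V E en x \<longleftrightarrow>
     (\<forall>e \<in> E. 0 \<le> x e) \<and>
     (\<forall>S. S \<noteq> {} \<and> S \<subset> V \<longrightarrow> sum x (Ein en E S) \<le> real (card S) - 1) \<and>
     sum x E = real (card V) - 1"

definition P_feasible :: "'a set \<Rightarrow> 'e set \<Rightarrow> ('e \<Rightarrow> 'a set) \<Rightarrow> 'a set set \<Rightarrow> ('a set \<Rightarrow> int)
    \<Rightarrow> real \<Rightarrow> ('e \<Rightarrow> real) \<Rightarrow> bool" where
  "P_feasible V E en \<S> b lam x \<longleftrightarrow>
     frac_st V E en x \<and> (\<forall>S \<in> \<S>. sum x (dlt en E S) \<le> lam * real_of_int (b S))"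

definition lp_cost :: "('e \<Rightarrow> real) \<Rightarrow> 'e set \<Rightarrow> ('e \<Rightarrow> real) \<Rightarrow> real" where
  "lp_cost c E x = (\<Sum>e\<in>E. c e * x e)"

definition P_optimal :: "'a set \<Rightarrow> 'e set \<Rightarrow> ('e \<Rightarrow> 'a set) \<Rightarrow> 'a set set \<Rightarrow> ('a set \<Rightarrow> int)
    \<Rightarrow> ('e \<Rightarrow> real) \<Rightarrow> real \<Rightarrow> ('e \<Rightarrow> real) \<Rightarrow> bool" where
  "P_optimal V E en \<S> b c lam x \<longleftrightarrow>
     P_feasible V E en \<S> b lam x \<and>
     (\<forall>y. P_feasible V E en \<S> b lam y \<longrightarrow> lp_cost c E x \<le> lp_cost c E y)"

definition OPT_lp :: "'a set \<Rightarrow> 'e set \<Rightarrow> ('e \<Rightarrow> 'a set) \<Rightarrow> 'a set set \<Rightarrow> ('a set \<Rightarrow> int)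
    \<Rightarrow> ('e \<Rightarrow> real) \<Rightarrow> real \<Rightarrow> real" where
  "OPT_lp V E en \<S> b c lam = Inf (lp_cost c E ` {x. P_feasible V E en \<S> b lam x})"

definition laminar :: "'a set set \<Rightarrow> bool" where
  "laminar \<L> \<longleftrightarrow> (\<forall>A \<in> \<L>. \<forall>B \<in> \<L>. A \<subseteq> B \<or> B \<subseteq> A \<or> A \<inter> B = {})"

definition tight_sets :: "'a set \<Rightarrow> 'e set \<Rightarrow> ('e \<Rightarrow> 'a set) \<Rightarrow> ('e \<Rightarrow> real) \<Rightarrow> 'a set set" where
  "tight_sets V E en x = {A. A \<noteq> {} \<and> A \<subseteq> V \<and> sum x (Ein en E A) = real (card A) - 1}"

definition laminar_decomp :: "'a set \<Rightarrow> 'e set \<Rightarrow> ('e \<Rightarrow> 'a set) \<Rightarrow> ('e \<Rightarrow> real) \<Rightarrow> 'a set set \<Rightarrow> bool" where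
  "laminar_decomp V E en x \<L> \<longleftrightarrow>
     \<L> \<subseteq> tight_sets V E en x \<and> laminar \<L> \<and>
     (\<forall>\<M>. \<L> \<subseteq> \<M> \<and> \<M> \<subseteq> tight_sets V E en x \<and> laminar \<M> \<longrightarrow> \<M> = \<L>)"

text \<open>Contracted graph G^L_L: maximal members of L strictly inside L are contracted.\<close>
definition children :: "'a set set \<Rightarrow> 'a set \<Rightarrow> 'a set set" where
  "children \<L> L = {A \<in> \<L>. A \<subset> L \<and> \<not> (\<exists>B \<in> \<L>. A \<subset> B \<and> B \<subset> L)}"

definition blk :: "'a set set \<Rightarrow> 'a set \<Rightarrow> 'a \<Rightarrow> 'a set" where
  "blk \<L> L v = (if \<exists>A \<in> children \<L> L. v \<in> A then (THE A. A \<in> children \<L> L \<and> v \<in> A) else {v})"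

definition contr_verts :: "'a set set \<Rightarrow> 'a set \<Rightarrow> 'a set set" where
  "contr_verts \<L> L = blk \<L> L ` L"

text \<open>Edges of G^L_L: edges of E(L) that do not become loops.\<close>
definition contr_edges :: "'e set \<Rightarrow> ('e \<Rightarrow> 'a set) \<Rightarrow> 'a set set \<Rightarrow> 'a set \<Rightarrow> 'e set" where
  "contr_edges E en \<L> L = {e \<in> Ein en E L. \<not> (\<exists>A \<in> children \<L> L. en e \<subseteq> A)}"

definition contr_ends :: "'a set set \<Rightarrow> 'a set \<Rightarrow> ('e \<Rightarrow> 'a set) \<Rightarrow> 'e \<Rightarrow> 'a set set" where
  "contr_ends \<L> L en e = blk \<L> L ` en e"

definition supp :: "'e set \<Rightarrow> ('e \<Rightarrow> real) \<Rightarrow> 'e set" where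
  "supp E x = {e \<in> E. x e > 0}"

definition Sets_of :: "'e set \<Rightarrow> ('e \<Rightarrow> 'a set) \<Rightarrow> 'a set set \<Rightarrow> 'e \<Rightarrow> 'a set set" where
  "Sets_of E en \<S> e = {S \<in> \<S>. e \<in> dlt en E S}"

definition rainbow :: "'e set \<Rightarrow> ('e \<Rightarrow> 'a set) \<Rightarrow> 'a set set \<Rightarrow> 'e \<Rightarrow> 'e \<Rightarrow> bool" where
  "rainbow E en \<S> e f \<longleftrightarrow> Sets_of E en \<S> e \<subseteq> Sets_of E en \<S> f \<or> Sets_of E en \<S> f \<subseteq> Sets_of E en \<S> e"

definition rainbow_free :: "'a set \<Rightarrow> 'e set \<Rightarrow> ('e \<Rightarrow> 'a set) \<Rightarrow> 'a set set \<Rightarrow> ('e \<Rightarrow> real)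
    \<Rightarrow> 'a set set \<Rightarrow> bool" where
  "rainbow_free V E en \<S> x \<L> \<longleftrightarrow>
     laminar_decomp V E en x \<L> \<and>
     (\<forall>L \<in> \<L>. \<forall>e \<in> supp E x \<inter> contr_edges E en \<L> L. \<forall>f \<in> supp E x \<inter> contr_edges E en \<L> L.
        e \<noteq> f \<longrightarrow> \<not> rainbow E en \<S> e f)"

end

theory Submission
  imports Defs
begin

text \<open>The degree bound is immediate from x'(\<delta>(S)) \<le> x*(\<delta>(S)) \<le> \<lambda> b_S. For the cost, the trees T_L
  glue together, so T \<subseteq> supp(x*) is connected inside every set of \<L>' \<supseteq> \<L>; uncrossing extends
  this to every x*-tight set, i.e. the incidence vector \<chi>^T lies on the minimal face of the
  spanning tree polytope containing x*. Hence for every y feasible for (P_1) and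
  k = \<lambda>/(\<lambda> - 1), a small step from x* in direction x* - \<chi>^T + k (y - x*) stays feasible for
  (P_\<lambda>): tight subtour constraints are kept because T spans the tight sets, and tight degree
  constraints because k b_S (\<lambda> - 1) = \<lambda> b_S. Optimality of x* then forces
  c(T) \<le> k c(y) - (k - 1) c(x*) \<le> k c(y).\<close>

definition edges_in :: "'a set \<Rightarrow> ('e \<Rightarrow> 'a set) \<Rightarrow> 'e set \<Rightarrow> bool" where
  "edges_in W en F \<longleftrightarrow> (\<forall>e\<in>F. card (en e) = 2 \<and> en e \<subseteq> W)"

definition forest :: "('e \<Rightarrow> 'a set) \<Rightarrow> 'e set \<Rightarrow> bool" where
  "forest en F \<longleftrightarrow> (\<forall>e\<in>F. \<forall>u v. en e = {u, v} \<longrightarrow> (u, v) \<notin> (adj en (F - {e}))\<^sup>*)"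

definition components :: "'a set \<Rightarrow> ('e \<Rightarrow> 'a set) \<Rightarrow> 'e set \<Rightarrow> 'a set set" where
  "components W en F = (\<lambda>v. (adj en F)\<^sup>* `` {v}) ` W"

lemma edges_in_insertD:
  assumes "edges_in W en (insert e F)"
  obtains a b where "en e = {a, b}" "a \<in> W" "b \<in> W" "edges_in W en F"
  using assms unfolding edges_in_def card_2_iff by auto

lemma sym_adj: "sym (adj en F)"
  unfolding adj_def sym_def by (auto simp: insert_commute)

lemma rtrancl_adj_sym: "(u, v) \<in> (adj en F)\<^sup>* \<Longrightarrow> (v, u) \<in> (adj en F)\<^sup>*"
  using sym_rtrancl[OF sym_adj[of en F]] by (auto dest: symD)

lemma rtrancl_adj_mono: "F \<subseteq> G \<Longrightarrow> (adj en F)\<^sup>* \<subseteq> (adj en G)\<^sup>*"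
  unfolding adj_def by (rule rtrancl_mono) auto

lemma rtrancl_adj_Image_eq:
  "(u, v) \<in> (adj en F)\<^sup>* \<Longrightarrow> (adj en F)\<^sup>* `` {v} = (adj en F)\<^sup>* `` {u}"
  by (auto intro: rtrancl_trans rtrancl_adj_sym)

lemma rtrancl_adj_closed:
  assumes "\<forall>e\<in>F. en e \<subseteq> W" "(u, v) \<in> (adj en F)\<^sup>*" "u \<in> W"
  shows "v \<in> W"
  using assms(2,3)
proof (induction rule: rtrancl_induct)
  case (step y z)
  then obtain e where "e \<in> F" "en e = {y, z}" unfolding adj_def by auto
  with assms(1) show ?case by auto
qed

lemma rtrancl_adj_insert:
  assumes e: "en e = {a, b}"
  shows "(u, v) \<in> (adj en (insert e F))\<^sup>* \<longleftrightarrow>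
     (u, v) \<in> (adj en F)\<^sup>* \<or> ((u, a) \<in> (adj en F)\<^sup>* \<and> (b, v) \<in> (adj en F)\<^sup>*)
       \<or> ((u, b) \<in> (adj en F)\<^sup>* \<and> (a, v) \<in> (adj en F)\<^sup>*)"
    (is "_ \<longleftrightarrow> ?P v")
proof
  let ?R = "(adj en F)\<^sup>*"
  have adj: "adj en (insert e F) = adj en F \<union> {(a, b), (b, a)}"
    using e unfolding adj_def by (auto simp: doubleton_eq_iff)
  {
    assume "(u, v) \<in> (adj en (insert e F))\<^sup>*"
    then show "?P v"
      unfolding adj
    proof (induction rule: rtrancl_induct)
      case (step y z)
      then show ?case
        by (auto intro: rtrancl_into_rtrancl rtrancl_adj_sym)
    qed simp
  }
  have "?R \<subseteq> (adj en (insert e F))\<^sup>*" by (rule rtrancl_adj_mono) auto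
  moreover have "(a, b) \<in> (adj en (insert e F))\<^sup>*" "(b, a) \<in> (adj en (insert e F))\<^sup>*"
    unfolding adj by auto
  ultimately show "?P v \<Longrightarrow> (u, v) \<in> (adj en (insert e F))\<^sup>*"
    by (meson rtrancl_trans subsetD)
qed

lemma components_insert_connected:
  assumes "en e = {a, b}" "(a, b) \<in> (adj en F)\<^sup>*"
  shows "components W en (insert e F) = components W en F"
proof -
  have "(adj en (insert e F))\<^sup>* = (adj en F)\<^sup>*"
    using rtrancl_adj_insert[where en=en and e=e and F=F, OF assms(1)] assms(2)
      rtrancl_adj_sym[OF assms(2)]
    by (auto intro: rtrancl_trans)
  then show ?thesis unfolding components_def by simp
qed

lemma rtrancl_adj_insert_Image:
  assumes e: "en e = {a, b}"
  shows "(adj en (insert e F))\<^sup>* `` {v} =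
    (let D = (adj en F)\<^sup>* `` {a} \<union> (adj en F)\<^sup>* `` {b}
     in if v \<in> D then D else (adj en F)\<^sup>* `` {v})"
proof -
  let ?R = "(adj en F)\<^sup>*"
  have step: "u \<in> (adj en (insert e F))\<^sup>* `` {v} \<longleftrightarrow>
      (v, u) \<in> ?R \<or> ((v, a) \<in> ?R \<and> (b, u) \<in> ?R) \<or> ((v, b) \<in> ?R \<and> (a, u) \<in> ?R)" for u
    using rtrancl_adj_insert[where en=en and e=e and F=F, OF e] by simp
  show ?thesis
  proof (cases "(a, v) \<in> ?R \<or> (b, v) \<in> ?R")
    case True
    then have "(v, a) \<in> ?R \<or> (v, b) \<in> ?R" by (auto intro: rtrancl_adj_sym)
    then have "u \<in> (adj en (insert e F))\<^sup>* `` {v} \<longleftrightarrow> (a, u) \<in> ?R \<or> (b, u) \<in> ?R" for u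
      unfolding step by (meson rtrancl_trans rtrancl_adj_sym)
    with True show ?thesis by (auto simp: Let_def)
  next
    case False
    then have "(v, a) \<notin> ?R" "(v, b) \<notin> ?R" by (auto intro: rtrancl_adj_sym)
    with False show ?thesis using step by (auto simp: Let_def)
  qed
qed

lemma card_components_insert_bridge:
  assumes fin: "finite W" and e: "en e = {a, b}" "a \<in> W" "b \<in> W"
    and not_conn: "(a, b) \<notin> (adj en F)\<^sup>*"
  shows "card (components W en (insert e F)) + 1 = card (components W en F)"
proof -
  define C where "C v = (adj en F)\<^sup>* `` {v}" for v
  define D where "D = C a \<union> C b"
  define X where "X = C ` (W - D)"
  have C_eq: "C v = C u" if "(u, v) \<in> (adj en F)\<^sup>*" for u v
    unfolding C_def using that by (rule rtrancl_adj_Image_eq)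
  have X_disj: "Z \<inter> D = {}" if "Z \<in> X" for Z
    using that unfolding X_def D_def C_def by (auto intro: rtrancl_trans rtrancl_adj_sym)
  have ab: "a \<in> C a" "b \<in> C b" "b \<notin> C a"
    using not_conn unfolding C_def by auto
  have split: "f ` W = f ` (W \<inter> D) \<union> f ` (W - D)" for f :: "'a \<Rightarrow> 'a set"
    by (metis Int_Diff_Un image_Un)
  have "C ` (W \<inter> D) = {C a, C b}"
  proof
    show "C ` (W \<inter> D) \<subseteq> {C a, C b}"
    proof
      fix Z assume "Z \<in> C ` (W \<inter> D)"
      then obtain v where "Z = C v" "v \<in> C a \<or> v \<in> C b"
        unfolding D_def by blast
      then show "Z \<in> {C a, C b}"
        using C_eq unfolding C_def by blast
    qed
    show "{C a, C b} \<subseteq> C ` (W \<inter> D)"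
      using e(2,3) ab(1,2) unfolding D_def by blast
  qed
  then have old: "components W en F = insert (C a) (insert (C b) X)"
    using split[of C] unfolding components_def C_def[symmetric] X_def by simp
  have "(\<lambda>v. if v \<in> D then D else C v) ` (W \<inter> D) = {D}"
    using e(2) ab(1) unfolding D_def by auto
  then have new: "components W en (insert e F) = insert D X"
    using split[of "\<lambda>v. if v \<in> D then D else C v"]
    unfolding components_def rtrancl_adj_insert_Image[where en=en and e=e and F=F, OF e(1)]
      Let_def C_def[symmetric] D_def[symmetric] X_def
    by simp
  have "C a \<notin> X" "C b \<notin> X" "D \<notin> X"
    using X_disj ab unfolding D_def by blast+
  moreover have "C a \<noteq> C b" using ab by blast
  moreover have "finite X" unfolding X_def using fin by simp
  ultimately show ?thesis unfolding old new by simp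
qed

lemma card_components_empty: "card (components W en {}) = card W"
proof -
  have "components W en {} = (\<lambda>v. {v}) ` W"
    unfolding components_def adj_def by auto
  then show ?thesis by (simp add: card_image)
qed

lemma card_le_card_edges_components:
  assumes "finite F" "finite W" "edges_in W en F"
  shows "card W \<le> card F + card (components W en F)"
  using assms
proof (induction F rule: finite_induct)
  case empty
  then show ?case by (simp add: card_components_empty)
next
  case (insert e F)
  from insert.prems(2) obtain a b where e: "en e = {a, b}" "a \<in> W" "b \<in> W" "edges_in W en F"
    by (rule edges_in_insertD)
  have IH: "card W \<le> card F + card (components W en F)"
    using insert.IH insert.prems(1) e(4) .
  show ?case
  proof (cases "(a, b) \<in> (adj en F)\<^sup>*")
    case True
    then show ?thesis
      using IH insert.hyps components_insert_connected[where en=en and e=e and F=F and W=W, OF e(1)]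
      by simp
  next
    case False
    then show ?thesis
      using IH insert.hyps
        card_components_insert_bridge[where en=en and e=e and F=F, OF insert.prems(1) e(1-3)]
      by simp
  qed
qed

lemma forest_mono:
  assumes "forest en G" "F \<subseteq> G"
  shows "forest en F"
  unfolding forest_def
proof (intro ballI allI impI)
  fix e u v assume "e \<in> F" "en e = {u, v}"
  then have "(u, v) \<notin> (adj en (G - {e}))\<^sup>*"
    using assms unfolding forest_def by blast
  moreover have "(adj en (F - {e}))\<^sup>* \<subseteq> (adj en (G - {e}))\<^sup>*"
    using assms(2) by (intro rtrancl_adj_mono) blast
  ultimately show "(u, v) \<notin> (adj en (F - {e}))\<^sup>*" by blast
qed

lemma forest_card_eq:
  assumes "finite F" "finite W" "edges_in W en F" "forest en F"
  shows "card W = card F + card (components W en F)"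
  using assms
proof (induction F rule: finite_induct)
  case empty
  then show ?case by (simp add: card_components_empty)
next
  case (insert e F)
  from insert.prems(2) obtain a b where e: "en e = {a, b}" "a \<in> W" "b \<in> W" "edges_in W en F"
    by (rule edges_in_insertD)
  have "forest en F"
    using insert.prems(3) by (rule forest_mono) blast
  then have IH: "card W = card F + card (components W en F)"
    using insert.IH insert.prems(1) e(4) by blast
  have "(a, b) \<notin> (adj en F)\<^sup>*"
    using insert.prems(3) insert.hyps(2) e(1) unfolding forest_def by auto
  then show ?case
    using IH insert.hyps
      card_components_insert_bridge[where en=en and e=e and F=F, OF insert.prems(1) e(1-3)]
    by simp
qed

lemma connected_card_le:
  assumes "finite F" "finite W" "edges_in W en F" "\<forall>u\<in>W. \<forall>v\<in>W. (u, v) \<in> (adj en F)\<^sup>*"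
  shows "card W \<le> card F + 1"
proof -
  have "(adj en F)\<^sup>* `` {v} = W" if "v \<in> W" for v
    using that assms(3,4) rtrancl_adj_closed[of F en W v] unfolding edges_in_def by auto
  then have "components W en F \<subseteq> {W}"
    unfolding components_def by auto
  then have "card (components W en F) \<le> 1"
    using card_mono[of "{W}"] by fastforce
  then show ?thesis using card_le_card_edges_components[OF assms(1-3)] by linarith
qed

lemma forest_card_le:
  assumes "finite F" "finite W" "edges_in W en F" "forest en F" "W \<noteq> {}"
  shows "card F + 1 \<le> card W"
proof -
  have "card (components W en F) \<ge> 1"
    using assms(2,5) unfolding components_def by (simp add: Suc_le_eq card_gt_0_iff)
  then show ?thesis using forest_card_eq[OF assms(1-4)] by linarith
qed

lemma connected_by_contraction:
  assumes blocks: "\<And>v. v \<in> L \<Longrightarrow> v \<in> B v \<and> B v \<subseteq> L \<and> (\<forall>p\<in>B v. \<forall>q\<in>B v. (p, q) \<in> (adj en F)\<^sup>*)"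
    and edges: "\<And>e. e \<in> G \<Longrightarrow> e \<in> F \<and> card (en e) = 2 \<and> en e \<subseteq> L"
    and conn: "connected_graph (B ` L) (\<lambda>e. B ` en e) G"
    and u: "u \<in> L" and v: "v \<in> L"
  shows "(u, v) \<in> (adj en F)\<^sup>*"
proof -
  let ?R = "(adj en F)\<^sup>*"
  have lift: "\<forall>p\<in>B u. \<forall>q\<in>Y. (p, q) \<in> ?R" if "(B u, Y) \<in> (adj (\<lambda>e. B ` en e) G)\<^sup>*" for Y
    using that
  proof (induction rule: rtrancl_induct)
    case base
    then show ?case using blocks[OF u] by blast
  next
    case (step Y Z)
    then obtain e where e: "e \<in> G" "B ` en e = {Y, Z}"
      unfolding adj_def by auto
    with edges obtain p q where pq: "en e = {p, q}" "p \<in> L" "q \<in> L" "e \<in> F"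
      unfolding card_2_iff by (metis insert_subset)
    then have "(p, q) \<in> ?R" "(q, p) \<in> ?R"
      unfolding adj_def by (auto intro!: r_into_rtrancl simp: insert_commute)
    moreover have "(B p = Y \<and> B q = Z) \<or> (B q = Y \<and> B p = Z)"
      using e(2) pq(1) by (auto simp: doubleton_eq_iff)
    ultimately show ?case
      using step.IH blocks[OF pq(2)] blocks[OF pq(3)] by (meson rtrancl_trans)
  qed
  have "(B u, B v) \<in> (adj (\<lambda>e. B ` en e) G)\<^sup>*"
    using conn u v unfolding connected_graph_def by blast
  then show ?thesis
    using lift blocks[OF u] blocks[OF v] by blast
qed

lemma children_unique:
  assumes "laminar \<L>" "A \<in> children \<L> L" "B \<in> children \<L> L" "v \<in> A" "v \<in> B"
  shows "A = B"
proof -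
  have "A \<in> \<L>" "B \<in> \<L>" "A \<subset> L" "B \<subset> L"
    using assms(2,3) unfolding children_def by auto
  then have "A \<subseteq> B \<or> B \<subseteq> A"
    using assms(1,4,5) unfolding laminar_def by blast
  moreover have "\<not> A \<subset> B" "\<not> B \<subset> A"
    using assms(2,3) \<open>A \<in> \<L>\<close> \<open>B \<in> \<L>\<close> \<open>A \<subset> L\<close> \<open>B \<subset> L\<close> unfolding children_def by auto
  ultimately show ?thesis by blast
qed

lemma blk_child:
  assumes "laminar \<L>" "A \<in> children \<L> L" "v \<in> A"
  shows "blk \<L> L v = A"
proof -
  have "(THE B. B \<in> children \<L> L \<and> v \<in> B) = A"
  proof (rule the_equality)
    fix B assume "B \<in> children \<L> L \<and> v \<in> B"
    then show "B = A" using children_unique[OF assms(1) _ assms(2) _ assms(3)] by blast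
  qed (use assms in simp)
  then show ?thesis unfolding blk_def using assms(2,3) by auto
qed

lemma laminar_contraction_connected:
  assumes fin: "finite V" and lam: "laminar \<L>" and sub: "\<forall>A\<in>\<L>. A \<subseteq> V"
    and edges: "\<forall>e\<in>E. card (en e) = 2"
    and trees: "\<forall>L\<in>\<L>. TL L \<subseteq> T \<inter> contr_edges E en \<L> L \<and>
       connected_graph (contr_verts \<L> L) (contr_ends \<L> L en) (TL L)"
    and L: "L \<in> \<L>" and u: "u \<in> L" and v: "v \<in> L"
  shows "(u, v) \<in> (adj en (T \<inter> Ein en E L))\<^sup>*"
  using L u v
proof (induction "card L" arbitrary: L u v rule: less_induct)
  case less
  let ?F = "T \<inter> Ein en E L"
  have "finite L" using less.prems(1) sub fin finite_subset by blast
  have blocks: "w \<in> blk \<L> L w \<and> blk \<L> L w \<subseteq> L \<and>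
      (\<forall>p\<in>blk \<L> L w. \<forall>q\<in>blk \<L> L w. (p, q) \<in> (adj en ?F)\<^sup>*)"
    if "w \<in> L" for w
  proof (cases "\<exists>A\<in>children \<L> L. w \<in> A")
    case True
    then obtain A where A: "A \<in> children \<L> L" "w \<in> A" by blast
    then have "A \<in> \<L>" "A \<subset> L" unfolding children_def by auto
    then have "card A < card L" using \<open>finite L\<close> by (simp add: psubset_card_mono)
    moreover have "(adj en (T \<inter> Ein en E A))\<^sup>* \<subseteq> (adj en ?F)\<^sup>*"
      using \<open>A \<subset> L\<close> unfolding Ein_def by (intro rtrancl_adj_mono) auto
    ultimately have "\<forall>p\<in>A. \<forall>q\<in>A. (p, q) \<in> (adj en ?F)\<^sup>*"
      using less.hyps \<open>A \<in> \<L>\<close> by blast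
    then show ?thesis using blk_child[OF lam A] A \<open>A \<subset> L\<close> by auto
  next
    case False
    then show ?thesis using that unfolding blk_def by auto
  qed
  have "\<And>e. e \<in> TL L \<Longrightarrow> e \<in> ?F \<and> card (en e) = 2 \<and> en e \<subseteq> L"
    using trees less.prems(1) edges unfolding contr_edges_def Ein_def by blast
  moreover have "connected_graph (blk \<L> L ` L) (\<lambda>e. blk \<L> L ` en e) (TL L)"
    using trees less.prems(1) unfolding contr_verts_def contr_ends_def by (simp add: fun_eq_iff)
  ultimately show ?case
    using connected_by_contraction[OF blocks] less.prems(2,3) by blast
qed

definition crosses :: "'a set \<Rightarrow> 'a set \<Rightarrow> bool" where
  "crosses A B \<longleftrightarrow> A \<inter> B \<noteq> {} \<and> \<not> A \<subseteq> B \<and> \<not> B \<subseteq> A"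

lemma card_crossing_Int_less:
  assumes lam: "laminar \<L>" and fin: "finite \<L>" and L0: "L0 \<in> \<L>" "crosses S L0"
  shows "card {L\<in>\<L>. crosses (S \<inter> L0) L} < card {L\<in>\<L>. crosses S L}"
proof (rule psubset_card_mono)
  have "L \<in> {L\<in>\<L>. crosses S L} - {L0}" if L: "L \<in> \<L>" "crosses (S \<inter> L0) L" for L
  proof -
    have "L \<subseteq> L0 \<or> L0 \<subseteq> L \<or> L \<inter> L0 = {}"
      using lam L0(1) L(1) unfolding laminar_def by blast
    then have "L \<subseteq> L0" using L(2) unfolding crosses_def by blast
    then show ?thesis using L unfolding crosses_def by blast
  qed
  then show "{L\<in>\<L>. crosses (S \<inter> L0) L} \<subset> {L\<in>\<L>. crosses S L}"
    using L0 by blast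
qed (use fin in simp)

lemma card_crossing_Un_less:
  assumes lam: "laminar \<L>" and fin: "finite \<L>" and L0: "L0 \<in> \<L>" "crosses S L0"
  shows "card {L\<in>\<L>. crosses (S \<union> L0) L} < card {L\<in>\<L>. crosses S L}"
proof (rule psubset_card_mono)
  have "L \<in> {L\<in>\<L>. crosses S L} - {L0}" if L: "L \<in> \<L>" "crosses (S \<union> L0) L" for L
  proof -
    have "L \<subseteq> L0 \<or> L0 \<subseteq> L \<or> L \<inter> L0 = {}"
      using lam L0(1) L(1) unfolding laminar_def by blast
    then have "L0 \<subseteq> L \<or> L \<inter> L0 = {}" using L(2) unfolding crosses_def by blast
    then show ?thesis using L L0(2) unfolding crosses_def by blast
  qed
  then show "{L\<in>\<L>. crosses (S \<union> L0) L} \<subset> {L\<in>\<L>. crosses S L}"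
    using L0 by blast
qed (use fin in simp)

lemma frac_st_Ein_le:
  assumes "frac_st V E en x" "\<forall>e\<in>E. en e \<subseteq> V" "A \<noteq> {}" "A \<subseteq> V"
  shows "sum x (Ein en E A) \<le> real (card A) - 1"
proof (cases "A = V")
  case True
  then have "Ein en E A = E" using assms(2) unfolding Ein_def by auto
  with True show ?thesis using assms(1) unfolding frac_st_def by simp
next
  case False
  then show ?thesis using assms(1,3,4) unfolding frac_st_def by auto
qed

text \<open>x(E(S \<union> L)) + x(E(S \<inter> L)) exceeds x(E(S)) + x(E(L)) by the weight of the edges
  between S - L and L - S, while the subtour constraints bound it by
  |S \<union> L| - 1 + |S \<inter> L| - 1 = x(E(S)) + x(E(L)); so all these inequalities are tight.\<close>
lemma tight_sets_Int_Un:
  assumes fin: "finite V" "finite E" and edges: "\<forall>e\<in>E. en e \<subseteq> V"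
    and x: "frac_st V E en x"
    and S: "S \<in> tight_sets V E en x" and L: "L \<in> tight_sets V E en x" and meet: "S \<inter> L \<noteq> {}"
  shows "S \<inter> L \<in> tight_sets V E en x" "S \<union> L \<in> tight_sets V E en x"
    and "\<forall>e \<in> Ein en E (S \<union> L) - (Ein en E S \<union> Ein en E L). x e = 0"
proof -
  let ?X = "Ein en E (S \<union> L) - (Ein en E S \<union> Ein en E L)"
  have finEin: "finite (Ein en E A)" for A using fin(2) unfolding Ein_def by simp
  have nonneg: "\<forall>e\<in>E. 0 \<le> x e" using x unfolding frac_st_def by simp
  have sub: "S \<subseteq> V" "L \<subseteq> V" "S \<noteq> {}" and tight: "sum x (Ein en E S) = real (card S) - 1"
    "sum x (Ein en E L) = real (card L) - 1"
    using S L unfolding tight_sets_def by auto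
  have "Ein en E S \<union> Ein en E L \<subseteq> Ein en E (S \<union> L)" unfolding Ein_def by auto
  then have "sum x (Ein en E (S \<union> L)) = sum x (Ein en E S \<union> Ein en E L) + sum x ?X"
    using sum.subset_diff[OF _ finEin, of _ "S \<union> L" x] by (simp add: add.commute)
  also have "sum x (Ein en E S \<union> Ein en E L) =
      sum x (Ein en E S) + sum x (Ein en E L) - sum x (Ein en E (S \<inter> L))"
  proof -
    have "Ein en E (S \<inter> L) = Ein en E S \<inter> Ein en E L" unfolding Ein_def by auto
    then show ?thesis using sum_Un[OF finEin finEin, of x] by simp
  qed
  finally have modular: "sum x (Ein en E (S \<union> L)) + sum x (Ein en E (S \<inter> L)) =
      real (card S) + real (card L) - 2 + sum x ?X"
    using tight by simp
  have X_nonneg: "\<forall>e\<in>?X. 0 \<le> x e"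
    using nonneg unfolding Ein_def by auto
  then have "0 \<le> sum x ?X" by (intro sum_nonneg) blast
  moreover have "real (card (S \<union> L)) + real (card (S \<inter> L)) = real (card S) + real (card L)"
    using card_Un_Int[of S L] fin(1) sub finite_subset by (metis of_nat_add)
  moreover have "sum x (Ein en E (S \<union> L)) \<le> real (card (S \<union> L)) - 1"
    by (rule frac_st_Ein_le[OF x edges]) (use sub in auto)
  moreover have "sum x (Ein en E (S \<inter> L)) \<le> real (card (S \<inter> L)) - 1"
    by (rule frac_st_Ein_le[OF x edges meet]) (use sub in auto)
  ultimately have "sum x ?X = 0" "sum x (Ein en E (S \<union> L)) = real (card (S \<union> L)) - 1"
    "sum x (Ein en E (S \<inter> L)) = real (card (S \<inter> L)) - 1"
    using modular by linarith+
  then show "S \<inter> L \<in> tight_sets V E en x" "S \<union> L \<in> tight_sets V E en x"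
    using sub meet unfolding tight_sets_def by auto
  show "\<forall>e\<in>?X. x e = 0"
    using \<open>sum x ?X = 0\<close> X_nonneg sum_nonneg_eq_0_iff[of ?X x] finEin by blast
qed

lemma card_Ein_Un_Int:
  assumes "T \<inter> (Ein en E (S \<union> L) - (Ein en E S \<union> Ein en E L)) = {}" "finite E"
  shows "card (T \<inter> Ein en E (S \<union> L)) + card (T \<inter> Ein en E (S \<inter> L)) =
    card (T \<inter> Ein en E S) + card (T \<inter> Ein en E L)"
proof -
  have "T \<inter> Ein en E (S \<union> L) = (T \<inter> Ein en E S) \<union> (T \<inter> Ein en E L)"
    using assms(1) unfolding Ein_def by blast
  moreover have "T \<inter> Ein en E (S \<inter> L) = (T \<inter> Ein en E S) \<inter> (T \<inter> Ein en E L)"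
    unfolding Ein_def by auto
  moreover have "finite (T \<inter> Ein en E A)" for A using assms(2) unfolding Ein_def by simp
  ultimately show ?thesis using card_Un_Int by metis
qed

lemma crossing_tight_set_spanned:
  assumes fin: "finite V" "finite E" and edges: "\<forall>e\<in>E. en e \<subseteq> V"
    and x: "frac_st V E en x" and T: "\<forall>e\<in>T. 0 < x e"
    and S: "S \<in> tight_sets V E en x" and L: "L \<in> tight_sets V E en x" and meet: "S \<inter> L \<noteq> {}"
    and Int: "card (S \<inter> L) \<le> card (T \<inter> Ein en E (S \<inter> L)) + 1"
    and Un: "card (S \<union> L) \<le> card (T \<inter> Ein en E (S \<union> L)) + 1"
    and L_spanned: "card (T \<inter> Ein en E L) + 1 = card L"
  shows "card S \<le> card (T \<inter> Ein en E S) + 1"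
proof -
  have "x e \<noteq> 0" if "e \<in> T" for e using T that by fastforce
  then have "T \<inter> (Ein en E (S \<union> L) - (Ein en E S \<union> Ein en E L)) = {}"
    using tight_sets_Int_Un(3)[OF fin edges x S L meet] by blast
  then have "card (T \<inter> Ein en E (S \<union> L)) + card (T \<inter> Ein en E (S \<inter> L)) =
      card (T \<inter> Ein en E S) + card (T \<inter> Ein en E L)"
    using fin(2) by (rule card_Ein_Un_Int)
  moreover have "card (S \<union> L) + card (S \<inter> L) = card S + card L"
  proof -
    have "S \<subseteq> V" "L \<subseteq> V" using S L unfolding tight_sets_def by auto
    then have "finite S" "finite L" using fin(1) finite_subset by auto
    then show ?thesis using card_Un_Int by metis
  qed
  ultimately show ?thesis using Int Un L_spanned by linarith
qed

text \<open>Uncrossing, by induction on the number of members of \<L> crossed by S: a tight S crossing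
  some L0 \<in> \<L> is recovered by counting from the tight sets S \<inter> L0 and S \<union> L0, which cross fewer;
  an S crossing nothing belongs to \<L> by maximality.\<close>
lemma tight_sets_spanned:
  assumes fin: "finite V" "finite E" and edges: "\<forall>e\<in>E. en e \<subseteq> V"
    and x: "frac_st V E en x" and ld: "laminar_decomp V E en x \<L>"
    and T: "\<forall>e\<in>T. 0 < x e"
    and spanned: "\<forall>L\<in>\<L>. card (T \<inter> Ein en E L) + 1 = card L"
    and S: "S \<in> tight_sets V E en x"
  shows "card S \<le> card (T \<inter> Ein en E S) + 1"
  using S
proof (induction "card {L\<in>\<L>. crosses S L}" arbitrary: S rule: less_induct)
  case less
  have lam: "laminar \<L>" and tight: "\<L> \<subseteq> tight_sets V E en x"
    using ld unfolding laminar_decomp_def by auto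
  show ?case
  proof (cases "\<exists>L0\<in>\<L>. crosses S L0")
    case False
    then have "laminar (insert S \<L>)"
      using lam unfolding laminar_def crosses_def by blast
    moreover have "insert S \<L> \<subseteq> tight_sets V E en x" using tight less.prems by blast
    ultimately have "insert S \<L> = \<L>"
      using ld unfolding laminar_decomp_def by blast
    then have "card (T \<inter> Ein en E S) + 1 = card S" using spanned by blast
    then show ?thesis by linarith
  next
    case True
    then obtain L0 where L0: "L0 \<in> \<L>" "crosses S L0" by blast
    have "\<L> \<subseteq> Pow V" using tight unfolding tight_sets_def by auto
    then have "finite \<L>" using fin(1) finite_subset by blast
    then have IH: "card A \<le> card (T \<inter> Ein en E A) + 1"
      if "A \<in> {S \<inter> L0, S \<union> L0}" "A \<in> tight_sets V E en x" for A
    proof -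
      have "card {L\<in>\<L>. crosses A L} < card {L\<in>\<L>. crosses S L}"
        using that(1) card_crossing_Int_less[OF lam _ L0] card_crossing_Un_less[OF lam _ L0]
          \<open>finite \<L>\<close> by blast
      then show ?thesis using less.hyps that(2) by blast
    qed
    have meet: "S \<inter> L0 \<noteq> {}" using L0(2) unfolding crosses_def by blast
    have L0_tight: "L0 \<in> tight_sets V E en x" using L0(1) tight by blast
    note Int_Un = tight_sets_Int_Un[OF fin edges x less.prems L0_tight meet]
    show ?thesis
    proof (rule crossing_tight_set_spanned[OF fin edges x T less.prems L0_tight meet])
      show "card (S \<inter> L0) \<le> card (T \<inter> Ein en E (S \<inter> L0)) + 1"
        "card (S \<union> L0) \<le> card (T \<inter> Ein en E (S \<union> L0)) + 1"
        using IH Int_Un(1,2) by blast+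
      show "card (T \<inter> Ein en E L0) + 1 = card L0" using spanned L0(1) by blast
    qed
  qed
qed

lemma eventually_at_right_affine_le:
  fixes g B D :: real
  assumes "g \<le> B" "g = B \<Longrightarrow> D \<le> 0"
  shows "\<forall>\<^sub>F a in at_right 0. g + a * D \<le> B"
proof (cases "g = B")
  case True
  with assms(2) have "D \<le> 0" by blast
  have "\<forall>\<^sub>F a in at_right (0::real). 0 < a" by (rule eventually_at_right_less)
  then show ?thesis
    by eventually_elim (use True \<open>D \<le> 0\<close> in \<open>simp add: mult_nonneg_nonpos\<close>)
next
  case False
  with assms(1) have "g < B" by simp
  have "((\<lambda>a. g + a * D) \<longlongrightarrow> g + 0 * D) (at_right 0)"
    by (intro tendsto_intros)
  then have "\<forall>\<^sub>F a in at_right 0. g + a * D < B"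
    using \<open>g < B\<close> by (simp add: order_tendstoD(2))
  then show ?thesis by eventually_elim simp
qed

lemma P_feasible_perturb:
  assumes fin: "finite V" "finite E" "finite \<S>"
    and x: "P_feasible V E en \<S> b lam x"
    and nonneg: "\<forall>e\<in>E. x e = 0 \<longrightarrow> 0 \<le> d e"
    and tight: "\<forall>A. A \<noteq> {} \<and> A \<subset> V \<and> sum x (Ein en E A) = real (card A) - 1
                  \<longrightarrow> sum d (Ein en E A) \<le> 0"
    and deg: "\<forall>S\<in>\<S>. sum x (dlt en E S) = lam * real_of_int (b S) \<longrightarrow> sum d (dlt en E S) \<le> 0"
    and total: "sum d E = 0"
  obtains a where "0 < a" "P_feasible V E en \<S> b lam (\<lambda>e. x e + a * d e)"
proof -
  have sum_shift: "sum (\<lambda>e. x e + a * d e) F = sum x F + a * sum d F" for a F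
    by (simp add: sum.distrib sum_distrib_left)
  have x_nonneg: "\<forall>e\<in>E. 0 \<le> x e"
    and x_sub: "\<forall>A. A \<noteq> {} \<and> A \<subset> V \<longrightarrow> sum x (Ein en E A) \<le> real (card A) - 1"
    and x_total: "sum x E = real (card V) - 1"
    and x_deg: "\<forall>S\<in>\<S>. sum x (dlt en E S) \<le> lam * real_of_int (b S)"
    using x unfolding P_feasible_def frac_st_def by auto
  let ?\<A> = "{A. A \<noteq> {} \<and> A \<subset> V}"
  have "?\<A> \<subseteq> Pow V" by auto
  then have "finite ?\<A>" using fin(1) finite_subset by blast
  have "\<forall>\<^sub>F a in at_right 0. \<forall>e\<in>E. - x e + a * (- d e) \<le> 0"
    using fin(2) x_nonneg nonneg
    by (intro eventually_ball_finite ballI eventually_at_right_affine_le) auto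
  moreover have "\<forall>\<^sub>F a in at_right 0.
      \<forall>A\<in>?\<A>. sum x (Ein en E A) + a * sum d (Ein en E A) \<le> real (card A) - 1"
    using \<open>finite ?\<A>\<close> x_sub tight
    by (intro eventually_ball_finite ballI eventually_at_right_affine_le) auto
  moreover have "\<forall>\<^sub>F a in at_right 0.
      \<forall>S\<in>\<S>. sum x (dlt en E S) + a * sum d (dlt en E S) \<le> lam * real_of_int (b S)"
    using fin(3) x_deg deg
    by (intro eventually_ball_finite ballI eventually_at_right_affine_le) auto
  moreover have "\<forall>\<^sub>F a in at_right (0::real). 0 < a"
    by (rule eventually_at_right_less)
  ultimately have "\<forall>\<^sub>F a in at_right (0::real).
      0 < a \<and> P_feasible V E en \<S> b lam (\<lambda>e. x e + a * d e)"
    unfolding P_feasible_def frac_st_def sum_shift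
    by eventually_elim (use x_total total in \<open>auto simp: algebra_simps\<close>)
  then show thesis
    using that eventually_happens'[OF trivial_limit_at_right_real] by blast
qed

lemma sum_step_towards_tree:
  fixes x y :: "'e \<Rightarrow> real"
  assumes "finite F"
  shows "(\<Sum>e\<in>F. x e - of_bool (e \<in> T) + k * (y e - x e)) =
    sum x F - real (card (F \<inter> T)) + k * (sum y F - sum x F)"
  using assms by (simp add: sum.distrib sum_subtractf right_diff_distrib sum_distrib_left Int_def)

lemma P_feasible_step_towards_tree:
  assumes fin: "finite V" "finite E" "finite \<S>"
    and x: "P_feasible V E en \<S> b lam x" and y: "P_feasible V E en \<S> b 1 y"
    and k: "0 \<le> k" "k * (lam - 1) = lam"
    and T: "T \<subseteq> E" "\<forall>e\<in>T. 0 < x e" "card T + 1 = card V"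
    and spanned: "\<forall>A\<in>tight_sets V E en x. card A \<le> card (T \<inter> Ein en E A) + 1"
  obtains a where "0 < a"
    "P_feasible V E en \<S> b lam (\<lambda>e. x e + a * (x e - of_bool (e \<in> T) + k * (y e - x e)))"
proof -
  have y_sub: "\<forall>A. A \<noteq> {} \<and> A \<subset> V \<longrightarrow> sum y (Ein en E A) \<le> real (card A) - 1"
    and y_total: "sum y E = real (card V) - 1"
    and y_deg: "\<forall>S\<in>\<S>. sum y (dlt en E S) \<le> real_of_int (b S)"
    and y_nonneg: "\<forall>e\<in>E. 0 \<le> y e"
    using y unfolding P_feasible_def frac_st_def by auto
  have x_total: "sum x E = real (card V) - 1"
    using x unfolding P_feasible_def frac_st_def by auto
  define d where "d e = x e - of_bool (e \<in> T) + k * (y e - x e)" for e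
  have sum_d: "sum d F = sum x F - real (card (F \<inter> T)) + k * (sum y F - sum x F)"
    if "finite F" for F
    using sum_step_towards_tree[OF that] unfolding d_def .
  have finEin: "finite (Ein en E A)" "finite (dlt en E A)" for A
    using fin(2) unfolding Ein_def dlt_def by simp_all
  show thesis
  proof (rule P_feasible_perturb[OF fin x])
    show "\<forall>e\<in>E. x e = 0 \<longrightarrow> 0 \<le> d e"
      using T(2) y_nonneg k(1) unfolding d_def by force
    show "\<forall>A. A \<noteq> {} \<and> A \<subset> V \<and> sum x (Ein en E A) = real (card A) - 1
        \<longrightarrow> sum d (Ein en E A) \<le> 0"
    proof (intro allI impI)
      fix A assume A: "A \<noteq> {} \<and> A \<subset> V \<and> sum x (Ein en E A) = real (card A) - 1"
      then have "card A \<le> card (T \<inter> Ein en E A) + 1"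
        using spanned unfolding tight_sets_def by blast
      moreover have "k * (sum y (Ein en E A) - (real (card A) - 1)) \<le> 0"
        using y_sub A k(1) by (simp add: mult_nonneg_nonpos)
      ultimately show "sum d (Ein en E A) \<le> 0"
        using A sum_d[OF finEin(1)] by (simp add: Int_commute)
    qed
    show "\<forall>S\<in>\<S>. sum x (dlt en E S) = lam * real_of_int (b S) \<longrightarrow> sum d (dlt en E S) \<le> 0"
    proof (intro ballI impI)
      fix S assume S: "S \<in> \<S>" "sum x (dlt en E S) = lam * real_of_int (b S)"
      have "k * (sum y (dlt en E S) - lam * real_of_int (b S))
          \<le> k * (real_of_int (b S) - lam * real_of_int (b S))"
        using y_deg S(1) k(1) by (simp add: mult_left_mono)
      also have "\<dots> = - (k * (lam - 1)) * real_of_int (b S)"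
        by (simp add: algebra_simps)
      also have "\<dots> = - lam * real_of_int (b S)"
        using k(2) by simp
      finally show "sum d (dlt en E S) \<le> 0"
        using S(2) sum_d[OF finEin(2)] by simp
    qed
    show "sum d E = 0"
      using sum_d[OF fin(2)] T(1,3) x_total y_total by (simp add: Int_absorb1)
  qed (use that in \<open>simp add: d_def\<close>)
qed

lemma tree_cost_le:
  assumes fin: "finite V" "finite E" "finite \<S>"
    and opt: "P_optimal V E en \<S> b c lam x" and y: "P_feasible V E en \<S> b 1 y"
    and lam: "lam > 1" and cost: "\<forall>e\<in>E. 0 \<le> c e"
    and T: "T \<subseteq> E" "\<forall>e\<in>T. 0 < x e" "card T + 1 = card V"
    and spanned: "\<forall>A\<in>tight_sets V E en x. card A \<le> card (T \<inter> Ein en E A) + 1"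
  shows "sum c T \<le> lam / (lam - 1) * lp_cost c E y"
proof -
  define k where "k = lam / (lam - 1)"
  have k: "1 < k" "k * (lam - 1) = lam" unfolding k_def using lam by (simp_all add: field_simps)
  have x: "P_feasible V E en \<S> b lam x" using opt unfolding P_optimal_def by blast
  define d where "d e = x e - of_bool (e \<in> T) + k * (y e - x e)" for e
  have "0 \<le> k" using k(1) by simp
  then obtain a where a: "0 < a" "P_feasible V E en \<S> b lam (\<lambda>e. x e + a * d e)"
    unfolding d_def by (rule P_feasible_step_towards_tree[OF fin x y _ k(2) T spanned])
  have "lp_cost c E x \<le> lp_cost c E (\<lambda>e. x e + a * d e)"
    using opt a(2) unfolding P_optimal_def by blast
  also have "\<dots> = lp_cost c E x + a * (\<Sum>e\<in>E. c e * d e)"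
    unfolding lp_cost_def by (simp add: algebra_simps sum.distrib sum_distrib_left)
  also have "(\<Sum>e\<in>E. c e * d e) = lp_cost c E x - sum c T + k * (lp_cost c E y - lp_cost c E x)"
  proof -
    have "(\<Sum>e\<in>E. c e * of_bool (e \<in> T)) = sum c T"
      using fin(2) T(1) by (simp add: Int_absorb1 Int_def[symmetric])
    then show ?thesis
      unfolding lp_cost_def d_def
      by (simp add: algebra_simps sum.distrib sum_subtractf sum_distrib_left del: sum_mult_of_bool_eq)
  qed
  finally have "0 \<le> lp_cost c E x - sum c T + k * (lp_cost c E y - lp_cost c E x)"
    using a(1) by (simp add: zero_le_mult_iff)
  then have "sum c T \<le> k * lp_cost c E y - (k - 1) * lp_cost c E x"
    by (simp add: algebra_simps)
  moreover have "0 \<le> lp_cost c E x"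
    using x cost unfolding lp_cost_def P_feasible_def frac_st_def by (simp add: sum_nonneg)
  then have "0 \<le> (k - 1) * lp_cost c E x" using k(1) by simp
  ultimately have "sum c T \<le> k * lp_cost c E y" by linarith
  then show ?thesis unfolding k_def .
qed

lemma tree_card_eq:
  assumes "finite F" "finite W" "W \<noteq> {}" "edges_in W en F" "forest en F"
    and "\<forall>u\<in>W. \<forall>v\<in>W. (u, v) \<in> (adj en F)\<^sup>*"
  shows "card F + 1 = card W"
  using connected_card_le[OF assms(1,2,4,6)] forest_card_le[OF assms(1,2,4,5,3)] by linarith

lemma is_spanning_tree_iff:
  "is_spanning_tree W F en T \<longleftrightarrow> T \<subseteq> F \<and> edges_in W en T \<and> connected_graph W en T \<and> forest en T"
  unfolding is_spanning_tree_def edges_in_def forest_def by blast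

lemma spanning_tree_card:
  assumes "finite W" "finite F" "W \<noteq> {}" "is_spanning_tree W F en T"
  shows "card T + 1 = card W"
proof (rule tree_card_eq)
  show "finite T" using assms(2,4) finite_subset unfolding is_spanning_tree_iff by blast
  show "edges_in W en T" "forest en T" "\<forall>u\<in>W. \<forall>v\<in>W. (u, v) \<in> (adj en T)\<^sup>*"
    using assms(4) unfolding is_spanning_tree_iff connected_graph_def by auto
qed (use assms in auto)

lemma laminar_sets_spanned:
  assumes fin: "finite V" "finite E" and edges: "edges_in V en E"
    and T: "is_spanning_tree V E en T"
    and lam: "laminar \<L>" and sub: "\<forall>L\<in>\<L>. L \<noteq> {} \<and> L \<subseteq> V"
    and trees: "\<forall>L\<in>\<L>. TL L \<subseteq> T \<and>
       is_spanning_tree (contr_verts \<L> L) (contr_edges E en \<L> L) (contr_ends \<L> L en) (TL L)"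
    and L: "L \<in> \<L>"
  shows "card (T \<inter> Ein en E L) + 1 = card L"
proof (rule tree_card_eq)
  show "finite (T \<inter> Ein en E L)" using fin(2) unfolding Ein_def by simp
  show "finite L" "L \<noteq> {}" using sub L fin(1) finite_subset by auto
  show "edges_in L en (T \<inter> Ein en E L)"
    using edges unfolding edges_in_def Ein_def by auto
  have "forest en T" using T unfolding is_spanning_tree_iff by blast
  then show "forest en (T \<inter> Ein en E L)" by (rule forest_mono) blast
  have sub_V: "\<forall>A\<in>\<L>. A \<subseteq> V" and edges_2: "\<forall>e\<in>E. card (en e) = 2"
    using sub edges unfolding edges_in_def by auto
  have "\<forall>L\<in>\<L>. TL L \<subseteq> T \<inter> contr_edges E en \<L> L \<and>
      connected_graph (contr_verts \<L> L) (contr_ends \<L> L en) (TL L)"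
    using trees unfolding is_spanning_tree_iff by blast
  from laminar_contraction_connected[OF fin(1) lam sub_V edges_2 this L]
  show "\<forall>u\<in>L. \<forall>v\<in>L. (u, v) \<in> (adj en (T \<inter> Ein en E L))\<^sup>*" by blast
qed

lemma frac_st_nonempty:
  assumes "frac_st V E en x" "edges_in V en E"
  shows "V \<noteq> {}"
proof
  assume "V = {}"
  then have "E = {}" using assms(2) unfolding edges_in_def by fastforce
  with \<open>V = {}\<close> assms(1) show False unfolding frac_st_def by simp
qed

lemma le_scaled_OPT_lp:
  assumes "0 < k" "\<exists>x. P_feasible V E en \<S> b lam x"
    and "\<And>y. P_feasible V E en \<S> b lam y \<Longrightarrow> z \<le> k * lp_cost c E y"
  shows "z \<le> k * OPT_lp V E en \<S> b c lam"
proof -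
  have "z / k \<le> OPT_lp V E en \<S> b c lam"
    unfolding OPT_lp_def using assms
    by (intro cInf_greatest) (auto simp: pos_divide_le_eq mult.commute)
  then show ?thesis using assms(1) by (simp add: pos_divide_le_eq mult.commute)
qed

theorem theorem3:
  fixes V :: "'a set" and E :: "'e set" and en :: "'e \<Rightarrow> 'a set"
    and c :: "'e \<Rightarrow> real" and \<S> :: "'a set set" and b :: "'a set \<Rightarrow> int"
    and lam :: real and xs x' :: "'e \<Rightarrow> real" and \<L> \<L>' :: "'a set set"
    and TL :: "'a set \<Rightarrow> 'e set" and T :: "'e set"
  assumes finV: "finite V" and finE: "finite E"
    and edges: "\<forall>e \<in> E. card (en e) = 2 \<and> en e \<subseteq> V"
    and conn: "connected_graph V en E"
    and cost: "\<forall>e \<in> E. 0 \<le> c e"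
    and chain_proper: "\<forall>S \<in> \<S>. S \<subset> V"
    and chain: "\<forall>S \<in> \<S>. \<forall>S' \<in> \<S>. S \<subseteq> S' \<or> S' \<subseteq> S"
    and feas: "\<exists>x. P_feasible V E en \<S> b 1 x"
    and lam: "lam > 1"
    and step1_opt: "P_optimal V E en \<S> b c lam xs"
    and step1_lam: "laminar_decomp V E en xs \<L>"
    and step2_fst: "frac_st V E en x'"
    and step2_rf: "rainbow_free V E en \<S> x' \<L>'"
    and step2_supp: "supp E x' \<subseteq> supp E xs"
    and step2_sub: "\<L> \<subseteq> \<L>'"
    and step2_cut: "\<forall>S \<in> \<S>. sum x' (dlt en E S) \<le> sum xs (dlt en E S)"
    and step3_TL: "\<forall>L \<in> \<L>'. TL L \<subseteq> supp E x' \<and>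
        is_spanning_tree (contr_verts \<L>' L) (contr_edges E en \<L>' L) (contr_ends \<L>' L en) (TL L)"
    and step3_T: "T = (\<Union>L \<in> \<L>'. TL L)"
    and step3_st: "is_spanning_tree V E en T"
    and step3_deg: "\<forall>S \<in> \<S>. real (card (dlt en E S \<inter> T)) \<le> 9 * sum x' (dlt en E S)"
  shows "sum c T \<le> lam / (lam - 1) * OPT_lp V E en \<S> b c 1
    \<and> (\<forall>S \<in> \<S>. real (card (dlt en E S \<inter> T)) \<le> 9 * lam * real_of_int (b S))"
proof
  have edges_in: "edges_in V en E" using edges unfolding edges_in_def by blast
  have "\<S> \<subseteq> Pow V" using chain_proper by auto
  then have finS: "finite \<S>" using finV finite_subset by blast
  have T_E: "T \<subseteq> E" using step3_st unfolding is_spanning_tree_def by blast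
  have T_supp: "\<forall>e\<in>T. 0 < xs e" using step3_T step3_TL step2_supp unfolding supp_def by blast
  have T_card: "card T + 1 = card V"
    using spanning_tree_card[OF finV finE frac_st_nonempty[OF step2_fst edges_in] step3_st] .
  have "laminar \<L>'" "\<forall>L\<in>\<L>'. L \<noteq> {} \<and> L \<subseteq> V"
    using step2_rf unfolding rainbow_free_def laminar_decomp_def tight_sets_def by auto
  then have "\<forall>L\<in>\<L>. card (T \<inter> Ein en E L) + 1 = card L"
    using laminar_sets_spanned[OF finV finE edges_in step3_st] step2_sub step3_TL step3_T by blast
  then have spanned: "\<forall>A\<in>tight_sets V E en xs. card A \<le> card (T \<inter> Ein en E A) + 1"
    using tight_sets_spanned[OF finV finE _ _ step1_lam T_supp] edges step1_opt
    unfolding P_optimal_def P_feasible_def by blast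
  have "0 < lam / (lam - 1)" using lam by simp
  then show "sum c T \<le> lam / (lam - 1) * OPT_lp V E en \<S> b c 1"
    using feas tree_cost_le[OF finV finE finS step1_opt _ lam cost T_E T_supp T_card spanned]
    by (rule le_scaled_OPT_lp)
  show "\<forall>S \<in> \<S>. real (card (dlt en E S \<inter> T)) \<le> 9 * lam * real_of_int (b S)"
    using step1_opt step2_cut step3_deg unfolding P_optimal_def P_feasible_def by fastforce
qed

end
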